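(* Let $D_n$ be the degree (in-degree) of the sink in a random series-parallel network of size $n$ generated by the binary model. Then for $n\ge1$ $$\mathbb{E}(D_n)=\frac{1+\sqrt2}{2}\binom{n+\sqrt2-2}{n-1}-\frac{\sqrt2-1}{2}\binom{n-\sqrt2-2}{n-1},$$ and consequently $\mathbb{E}(D_n)\sim\frac{1+\sqrt2}{2}\frac{n^{\sqrt2-1}}{\Gamma(\sqrt2)}$ as $n\to\infty$.
   Context: Binary (uniform binary saturation) model of series-parallel networks: directed graphs with a source and a sink, edges oriented towards the sink. At step $1$ the network is a single edge from the source to the sink. At step $n>1$ one of the $n-1$ edges $(x,y)$ is chosen uniformly at random. If $x$ has out-degree $1$, a new parallel edge $(x,y)$ is added; if $x$ has out-degree $2$, $(x,y)$ is replaced by $(x,z),(z,y)$ with $z$ a new vertex. The network after step $n$ has size $n$ ($n$ edges). Binomial coefficients with real upper argument: $\binom{a}{k}=a(a-1)\cdots(a-k+1)/k!$. *)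

theory Defs
  imports "HOL-Analysis.Analysis" "HOL-Probability.Probability" "HOL-Library.Landau_Symbols"
begin

text \<open>A network is a list of directed edges (x,y) over vertices of type nat
 (parallel edges = repeated list entries). The source is vertex 0, the sink is vertex 1.\<close>

type_synonym network = "(nat \<times> nat) list"

definition source :: nat where "source = 0"
definition sink :: nat where "sink = 1"

definition outdeg :: "network \<Rightarrow> nat \<Rightarrow> nat" where
  "outdeg E v = length (filter (\<lambda>e. fst e = v) E)"

definition indeg :: "network \<Rightarrow> nat \<Rightarrow> nat" where
  "indeg E v = length (filter (\<lambda>e. snd e = v) E)"

definition fresh_vertex :: "network \<Rightarrow> nat" where
  "fresh_vertex E = Suc (Max (insert sink (insert source (fst ` set E \<union> snd ` set E))))"

definition grow_at :: "network \<Rightarrow> nat \<Rightarrow> network" where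
  "grow_at E i = (let (x, y) = E ! i in
     if outdeg E x = 1 then E @ [(x, y)]
     else (let z = fresh_vertex E in E[i := (x, z)] @ [(z, y)]))"

definition binary_step :: "network \<Rightarrow> network pmf" where
  "binary_step E = map_pmf (grow_at E) (pmf_of_set {..<length E})"

text \<open>binary_net k = random network after step k+1 (i.e. of size k+1).\<close>
primrec binary_net :: "nat \<Rightarrow> network pmf" where
  "binary_net 0 = return_pmf [(source, sink)]"
| "binary_net (Suc k) = binary_net k \<bind> binary_step"

definition network_of_size :: "nat \<Rightarrow> network pmf" where
  "network_of_size n = binary_net (n - 1)"

definition expected_sink_degree :: "nat \<Rightarrow> real" where
  "expected_sink_degree n =
     measure_pmf.expectation (network_of_size n) (\<lambda>E. real (indeg E sink))"

end

theory Submission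
  imports Defs "HOL-Real_Asymp.Real_Asymp"
begin

text \<open>Split the edges into the sink by the out-degree of their tail: \<open>A\<close> of them have a tail of
  out-degree 1, \<open>B\<close> a tail of out-degree 2. Choosing such an edge either duplicates it (\<open>A\<close>
  loses one, \<open>B\<close> gains two) or subdivides it (\<open>B\<close> loses one, \<open>A\<close> gains one); choosing
  any other edge leaves both counts unchanged. So in a network with \<open>k\<close> edges the expectations
  grow by \<open>(B - A) / k\<close> and \<open>(2A - B) / k\<close>, and the combinations \<open>A \<plusminus> B / sqrt 2\<close> are
  multiplied by \<open>1 + (\<plusminus>sqrt 2 - 1) / k\<close>, which makes them the binomial coefficients
  \<open>(k - 1 + c) gchoose (k - 1)\<close> with \<open>c = \<plusminus>sqrt 2 - 1\<close>. The degree of the sink is \<open>A + B\<close>, and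
  \<open>(k + c) gchoose k \<sim> k powr c / Gamma (c + 1)\<close> gives the asymptotics.\<close>

text \<open>In the binary model every tail has out-degree 1 or 2; testing for \<open>\<noteq> 1\<close> instead of
  \<open>= 2\<close> spares us that invariant.\<close>

definition unsat_sink_edge :: "network \<Rightarrow> nat \<times> nat \<Rightarrow> bool" where
  "unsat_sink_edge E e \<longleftrightarrow> snd e = sink \<and> outdeg E (fst e) = 1"

definition sat_sink_edge :: "network \<Rightarrow> nat \<times> nat \<Rightarrow> bool" where
  "sat_sink_edge E e \<longleftrightarrow> snd e = sink \<and> outdeg E (fst e) \<noteq> 1"

definition unsat_sink_count :: "network \<Rightarrow> nat" where
  "unsat_sink_count E = length (filter (unsat_sink_edge E) E)"

definition sat_sink_count :: "network \<Rightarrow> nat" where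
  "sat_sink_count E = length (filter (sat_sink_edge E) E)"

lemma indeg_sink_eq_counts: "indeg E sink = unsat_sink_count E + sat_sink_count E"
proof -
  have "indeg E sink = length (filter (\<lambda>e. outdeg E (fst e) = 1) (filter (\<lambda>e. snd e = sink) E))
      + length (filter (\<lambda>e. outdeg E (fst e) \<noteq> 1) (filter (\<lambda>e. snd e = sink) E))"
    unfolding indeg_def by (rule sum_length_filter_compl[symmetric])
  then show ?thesis
    by (simp add: unsat_sink_count_def sat_sink_count_def unsat_sink_edge_def[abs_def]
        sat_sink_edge_def[abs_def] filter_filter conj_commute)
qed

lemma length_filter_split:
  "length (filter P xs) = length (filter (\<lambda>x. P x \<and> \<not> Q x) xs) + length (filter P (filter Q xs))"
  by (induction xs) auto

lemma length_filter_list_update: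
  "i < length xs \<Longrightarrow>
   length (filter P (xs[i := v])) + of_bool (P (xs ! i)) = length (filter P xs) + of_bool (P v)"
proof (induction xs arbitrary: i)
  case (Cons x xs)
  then show ?case by (cases i) auto
qed simp

lemma fresh_vertex_not_in_network:
  "fresh_vertex E \<notin> fst ` set E" "fresh_vertex E \<noteq> sink"
proof -
  let ?V = "insert sink (insert source (fst ` set E \<union> snd ` set E))"
  have "v < fresh_vertex E" if "v \<in> ?V" for v
    using Max_ge[of ?V v] that unfolding fresh_vertex_def by simp
  then show "fresh_vertex E \<notin> fst ` set E" "fresh_vertex E \<noteq> sink"
    by auto
qed

lemma sink_counts_duplicate_edge:
  assumes "(x, y) \<in> set E" and "outdeg E x = 1"
  shows "unsat_sink_count E = unsat_sink_count (E @ [(x, y)]) + of_bool (y = sink)"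
    and "sat_sink_count (E @ [(x, y)]) = sat_sink_count E + 2 * of_bool (y = sink)"
proof -
  let ?E' = "E @ [(x, y)]"
  have outdeg': "outdeg ?E' w = outdeg E w + of_bool (w = x)" for w
    by (simp add: outdeg_def)
  have "length (filter (\<lambda>e. fst e = x) E) = 1"
    using assms(2) by (simp add: outdeg_def)
  then obtain e where "filter (\<lambda>e. fst e = x) E = [e]"
    by (auto simp: length_Suc_conv)
  moreover have "(x, y) \<in> set (filter (\<lambda>e. fst e = x) E)"
    using assms(1) by simp
  ultimately have tail_x: "filter (\<lambda>e. fst e = x) E = [(x, y)]"
    by simp
  have unsat': "unsat_sink_edge ?E' = (\<lambda>e. unsat_sink_edge E e \<and> \<not> fst e = x)"
    using assms(2) by (auto simp: unsat_sink_edge_def[abs_def] outdeg')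
  have sat': "sat_sink_edge ?E' = (\<lambda>e. sat_sink_edge E e \<or> fst e = x \<and> snd e = sink)"
    using assms(2) by (auto simp: sat_sink_edge_def[abs_def] outdeg')
  show "unsat_sink_count E = unsat_sink_count ?E' + of_bool (y = sink)"
    using length_filter_split[of "unsat_sink_edge E" E "\<lambda>e. fst e = x"] assms(2)
    by (simp add: unsat_sink_count_def unsat' tail_x unsat_sink_edge_def)
  have "filter (\<lambda>e. (sat_sink_edge E e \<or> fst e = x \<and> snd e = sink) \<and> \<not> fst e = x) E
      = filter (\<lambda>e. sat_sink_edge E e \<and> \<not> fst e = x) E"
    by (rule filter_cong) auto
  then have "length (filter (\<lambda>e. sat_sink_edge E e \<or> fst e = x \<and> snd e = sink) E)
      = length (filter (\<lambda>e. sat_sink_edge E e \<and> \<not> fst e = x) E) + of_bool (y = sink)"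
    using length_filter_split[of "\<lambda>e. sat_sink_edge E e \<or> fst e = x \<and> snd e = sink" E "\<lambda>e. fst e = x"]
      assms(2) by (simp add: tail_x sat_sink_edge_def)
  then show "sat_sink_count ?E' = sat_sink_count E + 2 * of_bool (y = sink)"
    using length_filter_split[of "sat_sink_edge E" E "\<lambda>e. fst e = x"] assms(2)
    by (simp add: sat_sink_count_def sat' tail_x sat_sink_edge_def)
qed

lemma sink_counts_subdivide_edge:
  assumes i: "i < length E" and xy: "E ! i = (x, y)" and "outdeg E x \<noteq> 1"
    and z: "z \<notin> fst ` set E" "z \<noteq> sink"
  shows "unsat_sink_count (E[i := (x, z)] @ [(z, y)]) = unsat_sink_count E + of_bool (y = sink)"
    and "sat_sink_count E = sat_sink_count (E[i := (x, z)] @ [(z, y)]) + of_bool (y = sink)"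
proof -
  let ?E' = "E[i := (x, z)] @ [(z, y)]"
  have "(x, y) \<in> set E"
    using i xy by (metis nth_mem)
  then have "z \<noteq> x"
    using z(1) by force
  have outdeg': "outdeg ?E' w = outdeg E w + of_bool (w = z)" for w
    using length_filter_list_update[OF i, of "\<lambda>e. fst e = w" "(x, z)"] xy
    by (simp add: outdeg_def)
  have "fst e \<noteq> z" if "e \<in> set (E[i := (x, z)])" for e
  proof -
    have "e = (x, z) \<or> e \<in> set E"
      using set_update_subset_insert[of E i "(x, z)"] that by blast
    then show ?thesis
      using z(1) \<open>z \<noteq> x\<close> by (metis fst_conv rev_image_eqI)
  qed
  then have same_on_old: "filter (P ?E') (E[i := (x, z)]) = filter (P E) (E[i := (x, z)])"
    if "P \<in> {unsat_sink_edge, sat_sink_edge}" for P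
    using that by (intro filter_cong) (auto simp: unsat_sink_edge_def sat_sink_edge_def outdeg')
  have "outdeg E z = 0"
    using z(1) by (force simp: outdeg_def filter_empty_conv)
  then have new_edge: "unsat_sink_edge ?E' (z, y) \<longleftrightarrow> y = sink" "\<not> sat_sink_edge ?E' (z, y)"
    by (simp_all add: unsat_sink_edge_def sat_sink_edge_def outdeg')
  have old_edges: "\<not> unsat_sink_edge E (x, y)" "\<not> unsat_sink_edge E (x, z)"
    "sat_sink_edge E (x, y) \<longleftrightarrow> y = sink" "\<not> sat_sink_edge E (x, z)"
    using assms(3) z(2) by (simp_all add: unsat_sink_edge_def sat_sink_edge_def)
  show "unsat_sink_count ?E' = unsat_sink_count E + of_bool (y = sink)"
    using length_filter_list_update[OF i, of "unsat_sink_edge E" "(x, z)"] same_on_old[of unsat_sink_edge]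
    by (simp add: unsat_sink_count_def new_edge old_edges xy)
  show "sat_sink_count E = sat_sink_count ?E' + of_bool (y = sink)"
    using length_filter_list_update[OF i, of "sat_sink_edge E" "(x, z)"] same_on_old[of sat_sink_edge]
    by (simp add: sat_sink_count_def new_edge old_edges xy)
qed

lemma sink_counts_grow_at:
  assumes "i < length E"
  shows "real (unsat_sink_count (grow_at E i))
           = real (unsat_sink_count E) + of_bool (sat_sink_edge E (E ! i)) - of_bool (unsat_sink_edge E (E ! i))"
      (is ?unsat)
    and "real (sat_sink_count (grow_at E i))
           = real (sat_sink_count E) + 2 * of_bool (unsat_sink_edge E (E ! i)) - of_bool (sat_sink_edge E (E ! i))"
      (is ?sat)
proof -
  obtain x y where xy: "E ! i = (x, y)"
    by fastforce
  have "(x, y) \<in> set E"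
    using assms xy by (metis nth_mem)
  have "?unsat \<and> ?sat"
  proof (cases "outdeg E x = 1")
    case True
    with sink_counts_duplicate_edge[OF \<open>(x, y) \<in> set E\<close> True] show ?thesis
      by (simp add: grow_at_def xy unsat_sink_edge_def sat_sink_edge_def)
  next
    case False
    with sink_counts_subdivide_edge[OF assms xy False fresh_vertex_not_in_network] show ?thesis
      by (simp add: grow_at_def xy Let_def unsat_sink_edge_def sat_sink_edge_def)
  qed
  then show ?unsat ?sat
    by simp_all
qed

lemma sum_of_bool_nth: "(\<Sum>i<length xs. of_bool (P (xs ! i))) = (of_nat (length (filter P xs)) :: 'a::semiring_1)"
  by (induction xs) (simp_all add: sum.lessThan_Suc_shift del: sum.lessThan_Suc)

lemma sum_unsat_sink_count_grow_at:
  "(\<Sum>i<length E. real (unsat_sink_count (grow_at E i)))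
     = real (length E) * real (unsat_sink_count E) + real (sat_sink_count E) - real (unsat_sink_count E)"
proof -
  have "(\<Sum>i<length E. real (unsat_sink_count (grow_at E i)))
      = (\<Sum>i<length E. real (unsat_sink_count E)
          + of_bool (sat_sink_edge E (E ! i)) - of_bool (unsat_sink_edge E (E ! i)))"
    by (intro sum.cong) (simp_all add: sink_counts_grow_at)
  then show ?thesis
    by (simp add: sum.distrib sum_subtractf sum_of_bool_nth unsat_sink_count_def sat_sink_count_def)
qed

lemma sum_sat_sink_count_grow_at:
  "(\<Sum>i<length E. real (sat_sink_count (grow_at E i)))
     = real (length E) * real (sat_sink_count E) + 2 * real (unsat_sink_count E) - real (sat_sink_count E)"
proof -
  have "(\<Sum>i<length E. real (sat_sink_count (grow_at E i)))
      = (\<Sum>i<length E. real (sat_sink_count E)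
          + 2 * of_bool (unsat_sink_edge E (E ! i)) - of_bool (sat_sink_edge E (E ! i)))"
    by (intro sum.cong) (simp_all add: sink_counts_grow_at)
  then show ?thesis
    by (simp add: sum.distrib sum_subtractf sum_of_bool_nth unsat_sink_count_def sat_sink_count_def
        flip: sum_distrib_left)
qed

lemma set_pmf_binary_step: "E \<noteq> [] \<Longrightarrow> set_pmf (binary_step E) = grow_at E ` {..<length E}"
  by (simp add: binary_step_def lessThan_empty_iff)

lemma expectation_binary_step:
  fixes h :: "network \<Rightarrow> real"
  assumes "E \<noteq> []"
  shows "measure_pmf.expectation (binary_step E) h = (\<Sum>i<length E. h (grow_at E i)) / real (length E)"
proof -
  have "{..<length E} \<noteq> {}"
    using assms by auto
  then show ?thesis
    by (simp add: binary_step_def integral_pmf_of_set)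
qed

lemma length_grow_at: "i < length E \<Longrightarrow> length (grow_at E i) = Suc (length E)"
  by (auto simp: grow_at_def Let_def split: prod.splits)

lemma binary_net_support:
  "finite (set_pmf (binary_net k)) \<and> (\<forall>E\<in>set_pmf (binary_net k). length E = Suc k)"
proof (induction k)
  case (Suc k)
  then have "E \<noteq> []" if "E \<in> set_pmf (binary_net k)" for E
    using that by auto
  then have "set_pmf (binary_net (Suc k)) = (\<Union>E\<in>set_pmf (binary_net k). grow_at E ` {..<length E})"
    by (simp add: set_pmf_binary_step)
  with Suc show ?case
    by (auto simp: length_grow_at)
qed simp

lemma expectation_binary_net_Suc:
  fixes h :: "network \<Rightarrow> real"
  shows "measure_pmf.expectation (binary_net (Suc k)) h
     = measure_pmf.expectation (binary_net k) (\<lambda>E. (\<Sum>i<length E. h (grow_at E i)) / real (Suc k))"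
proof -
  let ?S = "set_pmf (binary_net k)"
  have support: "finite ?S" "\<And>E. E \<in> ?S \<Longrightarrow> length E = Suc k" "\<And>E. E \<in> ?S \<Longrightarrow> E \<noteq> []"
    using binary_net_support[of k] by auto
  have "measure_pmf.expectation (binary_net (Suc k)) h
      = (\<Sum>E\<in>?S. pmf (binary_net k) E *\<^sub>R measure_pmf.expectation (binary_step E) h)"
    unfolding binary_net.simps
    by (rule pmf_expectation_bind) (use support in \<open>auto simp: set_pmf_binary_step\<close>)
  also have "\<dots> = (\<Sum>E\<in>?S. pmf (binary_net k) E *\<^sub>R ((\<Sum>i<length E. h (grow_at E i)) / real (Suc k)))"
    using support by (intro sum.cong refl) (simp add: expectation_binary_step)
  also have "\<dots> = measure_pmf.expectation (binary_net k) (\<lambda>E. (\<Sum>i<length E. h (grow_at E i)) / real (Suc k))"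
    using support by (intro integral_measure_pmf[symmetric]) auto
  finally show ?thesis .
qed

definition expected_unsat_sink_count :: "nat \<Rightarrow> real" where
  "expected_unsat_sink_count k = measure_pmf.expectation (binary_net k) (\<lambda>E. real (unsat_sink_count E))"

definition expected_sat_sink_count :: "nat \<Rightarrow> real" where
  "expected_sat_sink_count k = measure_pmf.expectation (binary_net k) (\<lambda>E. real (sat_sink_count E))"

lemma expected_sink_counts_Suc:
  defines "a \<equiv> expected_unsat_sink_count" and "b \<equiv> expected_sat_sink_count"
  shows "a (Suc k) = a k + (b k - a k) / real (Suc k)"
    and "b (Suc k) = b k + (2 * a k - b k) / real (Suc k)"
proof -
  let ?M = "measure_pmf (binary_net k)"
  have support: "finite (set_pmf (binary_net k))" "AE E in ?M. length E = Suc k"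
    using binary_net_support[of k] by (auto simp: AE_measure_pmf_iff)
  note integrable = integrable_measure_pmf_finite[OF support(1)]
  have "a (Suc k) = measure_pmf.expectation (binary_net k)
      (\<lambda>E. real (unsat_sink_count E) + (real (sat_sink_count E) - real (unsat_sink_count E)) / real (Suc k))"
    unfolding a_def expected_unsat_sink_count_def expectation_binary_net_Suc
    using support(2) by (intro integral_cong_AE) (auto simp: sum_unsat_sink_count_grow_at field_simps)
  then show "a (Suc k) = a k + (b k - a k) / real (Suc k)"
    by (simp add: a_def b_def expected_unsat_sink_count_def expected_sat_sink_count_def
        integrable del: of_nat_Suc)
  have "b (Suc k) = measure_pmf.expectation (binary_net k)
      (\<lambda>E. real (sat_sink_count E) + (2 * real (unsat_sink_count E) - real (sat_sink_count E)) / real (Suc k))"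
    unfolding b_def expected_sat_sink_count_def expectation_binary_net_Suc
    using support(2) by (intro integral_cong_AE) (auto simp: sum_sat_sink_count_grow_at field_simps)
  then show "b (Suc k) = b k + (2 * a k - b k) / real (Suc k)"
    by (simp add: a_def b_def expected_unsat_sink_count_def expected_sat_sink_count_def
        integrable del: of_nat_Suc)
qed

lemma gbinomial_of_recurrence:
  fixes x :: "nat \<Rightarrow> 'a::field_char_0"
  assumes "x 0 = 1" and "\<And>k. x (Suc k) = x k * (1 + c / of_nat (Suc k))"
  shows "x k = (of_nat k + c) gchoose k"
proof (induction k)
  case (Suc k)
  have "of_nat (Suc k) * ((of_nat (Suc k) + c) gchoose Suc k) = (of_nat (Suc k) + c) * ((of_nat k + c) gchoose k)"
    using gbinomial_absorption[of k "of_nat (Suc k) + c"] by (simp add: algebra_simps)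
  then show ?case
    using Suc by (simp add: assms(2) field_simps del: of_nat_Suc)
qed (simp add: assms(1))

lemma expected_sink_counts_eigen:
  defines "a \<equiv> expected_unsat_sink_count" and "b \<equiv> expected_sat_sink_count"
  shows "a k + b k / sqrt 2 = (real k + (sqrt 2 - 1)) gchoose k"
    and "a k - b k / sqrt 2 = (real k + (- sqrt 2 - 1)) gchoose k"
proof -
  have a0: "a 0 = 1" and b0: "b 0 = 0"
    by (simp_all add: a_def b_def expected_unsat_sink_count_def expected_sat_sink_count_def
        unsat_sink_count_def sat_sink_count_def unsat_sink_edge_def sat_sink_edge_def
        outdeg_def source_def sink_def)
  have sqrt2: "sqrt 2 * sqrt 2 = (2::real)"
    by simp
  show "a k + b k / sqrt 2 = (real k + (sqrt 2 - 1)) gchoose k"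
  proof (rule gbinomial_of_recurrence)
    fix k
    show "a (Suc k) + b (Suc k) / sqrt 2 = (a k + b k / sqrt 2) * (1 + (sqrt 2 - 1) / real (Suc k))"
      unfolding a_def b_def expected_sink_counts_Suc
      by (simp add: field_simps sqrt2 del: of_nat_Suc)
  qed (simp add: a0 b0)
  show "a k - b k / sqrt 2 = (real k + (- sqrt 2 - 1)) gchoose k"
  proof (rule gbinomial_of_recurrence)
    fix k
    show "a (Suc k) - b (Suc k) / sqrt 2 = (a k - b k / sqrt 2) * (1 + (- sqrt 2 - 1) / real (Suc k))"
      unfolding a_def b_def expected_sink_counts_Suc
      by (simp add: field_simps sqrt2 del: of_nat_Suc)
  qed (simp add: a0 b0)
qed

lemma expected_sink_degree_Suc:
  "expected_sink_degree (Suc k)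
     = (1 + sqrt 2) / 2 * ((real k + (sqrt 2 - 1)) gchoose k)
       - (sqrt 2 - 1) / 2 * ((real k + (- sqrt 2 - 1)) gchoose k)"
proof -
  have "finite (set_pmf (binary_net k))"
    using binary_net_support by blast
  then have "expected_sink_degree (Suc k) = expected_unsat_sink_count k + expected_sat_sink_count k"
    by (simp add: expected_sink_degree_def network_of_size_def indeg_sink_eq_counts
        expected_unsat_sink_count_def expected_sat_sink_count_def integrable_measure_pmf_finite)
  also have "\<dots> = (1 + sqrt 2) / 2 * (expected_unsat_sink_count k + expected_sat_sink_count k / sqrt 2)
      - (sqrt 2 - 1) / 2 * (expected_unsat_sink_count k - expected_sat_sink_count k / sqrt 2)"
    by (simp add: field_simps)
  finally show ?thesis
    by (simp only: expected_sink_counts_eigen)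
qed

lemma gbinomial_div_powr_tendsto:
  "(\<lambda>n. ((real n + c) gchoose n) / real n powr c) \<longlonglongrightarrow> rGamma (c + 1)"
proof -
  have "(\<lambda>n. ((c + real n) gchoose n) * exp (- c * ln (real n))) \<longlonglongrightarrow> rGamma (c + 1)"
    using Gamma_gbinomial[of c] by simp
  then show ?thesis
  proof (rule Lim_transform_eventually)
    show "\<forall>\<^sub>F n in sequentially. ((c + real n) gchoose n) * exp (- c * ln (real n))
        = ((real n + c) gchoose n) / real n powr c"
      using eventually_gt_at_top[of "0::nat"]
      by eventually_elim (simp add: powr_def exp_minus divide_inverse add.commute)
  qed
qed

lemma gbinomial_bigo_powr: "(\<lambda>n. (real n + c) gchoose n) \<in> O(\<lambda>n. real n powr c)"
  using gbinomial_div_powr_tendsto eventually_gt_at_top[of "0::nat"]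
  by (intro bigoI_tendsto) (auto elim: eventually_mono)

lemma gbinomial_asymp_equiv_powr:
  assumes "c > -1"
  shows "(\<lambda>n. (real n + c) gchoose n) \<sim>[at_top] (\<lambda>n. real n powr c / Gamma (c + 1))"
proof (rule asymp_equivI')
  have "Gamma (c + 1) \<noteq> 0"
    using assms by (simp add: Gamma_real_pos less_imp_neq[symmetric])
  moreover have "(\<lambda>n. ((real n + c) gchoose n) / real n powr c * Gamma (c + 1))
      \<longlonglongrightarrow> rGamma (c + 1) * Gamma (c + 1)"
    by (intro tendsto_intros gbinomial_div_powr_tendsto)
  ultimately have "(\<lambda>n. ((real n + c) gchoose n) / real n powr c * Gamma (c + 1)) \<longlonglongrightarrow> 1"
    by (simp add: rGamma_inverse_Gamma)
  then show "(\<lambda>n. ((real n + c) gchoose n) / (real n powr c / Gamma (c + 1))) \<longlonglongrightarrow> 1"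
    by simp
qed

lemma asymp_equiv_sequentially_Suc_iff:
  "(\<lambda>n. f (Suc n)) \<sim>[sequentially] (\<lambda>n. g (Suc n)) \<longleftrightarrow> f \<sim>[sequentially] g"
  unfolding asymp_equiv_def by (rule filterlim_sequentially_Suc)

lemma expected_sink_degree_Suc_asymp_equiv:
  "(\<lambda>k. expected_sink_degree (Suc k))
     \<sim>[at_top] (\<lambda>k. (1 + sqrt 2) / 2 * (real (Suc k) powr (sqrt 2 - 1) / Gamma (sqrt 2)))"
    (is "_ \<sim>[at_top] ?g")
proof -
  have "(\<lambda>k. (real k + (sqrt 2 - 1)) gchoose k) \<sim>[at_top] (\<lambda>k. real k powr (sqrt 2 - 1) / Gamma (sqrt 2))"
    using gbinomial_asymp_equiv_powr[of "sqrt 2 - 1"] by simp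
  also have "(\<lambda>k. real k powr (sqrt 2 - 1)) \<sim>[at_top] (\<lambda>k. real (Suc k) powr (sqrt 2 - 1))"
    by real_asymp
  then have "(\<lambda>k. real k powr (sqrt 2 - 1) / Gamma (sqrt 2))
      \<sim>[at_top] (\<lambda>k. real (Suc k) powr (sqrt 2 - 1) / Gamma (sqrt 2))"
    by (rule asymp_equiv_divide[OF _ asymp_equiv_refl])
  finally have dominant: "(\<lambda>k. (1 + sqrt 2) / 2 * ((real k + (sqrt 2 - 1)) gchoose k)) \<sim>[at_top] ?g"
    by (rule asymp_equiv_mult[OF asymp_equiv_refl])
  have "(\<lambda>k. real k powr (- sqrt 2 - 1)) \<in> o(\<lambda>k. real (Suc k) powr (sqrt 2 - 1))"
    by real_asymp
  then have minor: "(\<lambda>k. (real k + (- sqrt 2 - 1)) gchoose k) \<in> o(\<lambda>k. real (Suc k) powr (sqrt 2 - 1))"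
    by (rule landau_o.big_small_trans[OF gbinomial_bigo_powr])
  have nonzero: "(1 + sqrt 2) / 2 \<noteq> 0" "Gamma (sqrt 2) \<noteq> 0" "- ((sqrt 2 - 1) / 2) \<noteq> 0"
    by (simp_all add: add_pos_nonneg less_imp_neq[symmetric] Gamma_real_pos)
  have "(\<lambda>k. - ((sqrt 2 - 1) / 2) * ((real k + (- sqrt 2 - 1)) gchoose k)) \<in> o(?g)"
    unfolding landau_o.small.cmult[OF nonzero(1)] landau_o.small.cdiv[OF nonzero(2)]
      landau_o.small.cmult_in_iff[OF nonzero(3)] by (rule minor)
  from asymp_equiv_add_right[OF this, THEN iffD2, OF dominant] show ?thesis
    unfolding expected_sink_degree_Suc diff_conv_add_uminus minus_mult_left .
qed

theorem mainTheorem8: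
  shows "(\<forall>n::nat. n \<ge> 1 \<longrightarrow>
           expected_sink_degree n =
             (1 + sqrt 2) / 2 * ((real n + sqrt 2 - 2) gchoose (n - 1))
           - (sqrt 2 - 1) / 2 * ((real n - sqrt 2 - 2) gchoose (n - 1)))
       \<and> (\<lambda>n. expected_sink_degree n) \<sim>[at_top]
           (\<lambda>n. (1 + sqrt 2) / 2 * (real n powr (sqrt 2 - 1) / Gamma (sqrt 2)))"
proof (intro conjI allI impI)
  fix n :: nat
  assume "n \<ge> 1"
  then obtain k where n: "n = Suc k"
    using not0_implies_Suc by fastforce
  have "real (Suc k) + sqrt 2 - 2 = real k + (sqrt 2 - 1)"
    and "real (Suc k) - sqrt 2 - 2 = real k + (- sqrt 2 - 1)" and "Suc k - 1 = k"
    by simp_all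
  then show "expected_sink_degree n =
             (1 + sqrt 2) / 2 * ((real n + sqrt 2 - 2) gchoose (n - 1))
           - (sqrt 2 - 1) / 2 * ((real n - sqrt 2 - 2) gchoose (n - 1))"
    unfolding n by (simp only: expected_sink_degree_Suc)
next
  show "(\<lambda>n. expected_sink_degree n) \<sim>[at_top]
           (\<lambda>n. (1 + sqrt 2) / 2 * (real n powr (sqrt 2 - 1) / Gamma (sqrt 2)))"
    using expected_sink_degree_Suc_asymp_equiv
    by (rule asymp_equiv_sequentially_Suc_iff[THEN iffD1])
qed

end
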